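(* Let $M_1,M_2$ be primitive monoids, $N_i$ an order-ideal of $M_i$ ($i=1,2$), and suppose $M_1/N_1\cong M_2/N_2\cong S$. Let $P$ be the pullback of the resulting maps $M_1\to S\leftarrow M_2$. Assume that $p\lhd q$ for all $p\in\mathbb P(N_i)$ and all $q\in\mathbb P(M_i)\setminus\mathbb P(N_i)$, $i=1,2$. Then $P$ is a primitive monoid, $P$ has an order-ideal $N\cong N_1\times N_2$ with $P/N\cong S$, and $\mathbb P(P)=\mathbb P(S)\sqcup\mathbb P(N_1)\sqcup\mathbb P(N_2)$, where the relation $\lhd$ on $\mathbb P(P)$ is given by the relations $\lhd$ of $S$, $N_1$ and $N_2$ on the respective pieces together with $p\lhd q$ for all $p\in\mathbb P(N_1)\sqcup\mathbb P(N_2)$ and $q\in\mathbb P(S)$.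
   Context: Monoids are abelian. A prime is $p$ with $p\not\le0$ and $p\le a+b\Rightarrow p\le a$ or $p\le b$ (algebraic preorder $x\le y$ iff $y=x+z$); a primitive monoid is a primely generated antisymmetric refinement monoid, and $\mathbb P(M)$ denotes its set of primes. For primes, $q\lhd p$ means $p+q=p$; a primitive monoid is determined up to isomorphism by $(\mathbb P(M),\lhd)$. An order-ideal is a nonempty $I$ with $x+y\in I\iff x,y\in I$; $M/I$ is the quotient by $x\equiv y\iff x+u=y+v$ for some $u,v\in I$, and $\mathbb P(N)=\mathbb P(M)\cap N$. The quotient $M/N$ of a primitive monoid is primitive with primes identified with $\mathbb P(M)\setminus\mathbb P(N)$. The pullback of $f_1\colon M_1\to S$, $f_2\colon M_2\to S$ is $\{(x,y)\in M_1\times M_2: f_1(x)=f_2(y)\}$. *)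

theory Defs
  imports "HOL-Algebra.Group"
begin

text \<open>Abelian monoids are represented as HOL-Algebra monoid records, written
multiplicatively: the paper's x + y is the product of x and y in M and the
paper's 0 is the unit of M.\<close>

definition aleq :: "'a monoid \<Rightarrow> 'a \<Rightarrow> 'a \<Rightarrow> bool" where
  "aleq M x y \<longleftrightarrow> (\<exists>z\<in>carrier M. y = x \<otimes>\<^bsub>M\<^esub> z)"

definition is_prime :: "'a monoid \<Rightarrow> 'a \<Rightarrow> bool" where
  "is_prime M p \<longleftrightarrow> p \<in> carrier M \<and> \<not> aleq M p \<one>\<^bsub>M\<^esub> \<and>
     (\<forall>a\<in>carrier M. \<forall>b\<in>carrier M. aleq M p (a \<otimes>\<^bsub>M\<^esub> b) \<longrightarrow> aleq M p a \<or> aleq M p b)"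

definition primes :: "'a monoid \<Rightarrow> 'a set" where
  "primes M = {p. is_prime M p}"

definition lsum :: "'a monoid \<Rightarrow> 'a list \<Rightarrow> 'a" where
  "lsum M xs = foldr (\<lambda>x y. x \<otimes>\<^bsub>M\<^esub> y) xs \<one>\<^bsub>M\<^esub>"

definition primely_generated :: "'a monoid \<Rightarrow> bool" where
  "primely_generated M \<longleftrightarrow>
     (\<forall>x\<in>carrier M. \<exists>xs. set xs \<subseteq> primes M \<and> x = lsum M xs)"

definition antisymmetric_monoid :: "'a monoid \<Rightarrow> bool" where
  "antisymmetric_monoid M \<longleftrightarrow>
     (\<forall>x\<in>carrier M. \<forall>y\<in>carrier M. aleq M x y \<and> aleq M y x \<longrightarrow> x = y)"

definition refinement_monoid :: "'a monoid \<Rightarrow> bool" where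
  "refinement_monoid M \<longleftrightarrow>
     (\<forall>a0\<in>carrier M. \<forall>a1\<in>carrier M. \<forall>b0\<in>carrier M. \<forall>b1\<in>carrier M.
        a0 \<otimes>\<^bsub>M\<^esub> a1 = b0 \<otimes>\<^bsub>M\<^esub> b1 \<longrightarrow>
        (\<exists>c00\<in>carrier M. \<exists>c01\<in>carrier M. \<exists>c10\<in>carrier M. \<exists>c11\<in>carrier M.
           a0 = c00 \<otimes>\<^bsub>M\<^esub> c01 \<and> a1 = c10 \<otimes>\<^bsub>M\<^esub> c11 \<and>
           b0 = c00 \<otimes>\<^bsub>M\<^esub> c10 \<and> b1 = c01 \<otimes>\<^bsub>M\<^esub> c11))"

definition primitive :: "'a monoid \<Rightarrow> bool" where
  "primitive M \<longleftrightarrow> comm_monoid M \<and> primely_generated M \<and>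
     antisymmetric_monoid M \<and> refinement_monoid M"

text \<open>lhd M q p is the paper's q \<lhd> p, i.e. p + q = p.\<close>
definition lhd :: "'a monoid \<Rightarrow> 'a \<Rightarrow> 'a \<Rightarrow> bool" where
  "lhd M q p \<longleftrightarrow> p \<otimes>\<^bsub>M\<^esub> q = p"

definition order_ideal :: "'a monoid \<Rightarrow> 'a set \<Rightarrow> bool" where
  "order_ideal M I \<longleftrightarrow> I \<subseteq> carrier M \<and> I \<noteq> {} \<and>
     (\<forall>x\<in>carrier M. \<forall>y\<in>carrier M. x \<otimes>\<^bsub>M\<^esub> y \<in> I \<longleftrightarrow> x \<in> I \<and> y \<in> I)"

definition submon :: "'a monoid \<Rightarrow> 'a set \<Rightarrow> 'a monoid" where
  "submon M I = M\<lparr>carrier := I\<rparr>"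

definition qcong :: "'a monoid \<Rightarrow> 'a set \<Rightarrow> 'a \<Rightarrow> 'a \<Rightarrow> bool" where
  "qcong M I x y \<longleftrightarrow> (\<exists>u\<in>I. \<exists>v\<in>I. x \<otimes>\<^bsub>M\<^esub> u = y \<otimes>\<^bsub>M\<^esub> v)"

definition qclass :: "'a monoid \<Rightarrow> 'a set \<Rightarrow> 'a \<Rightarrow> 'a set" where
  "qclass M I x = {y\<in>carrier M. qcong M I x y}"

definition quot :: "'a monoid \<Rightarrow> 'a set \<Rightarrow> 'a set monoid" where
  "quot M I = \<lparr>carrier = qclass M I ` carrier M,
     mult = (\<lambda>A B. qclass M I ((SOME a. a \<in> A) \<otimes>\<^bsub>M\<^esub> (SOME b. b \<in> B))),
     one = qclass M I \<one>\<^bsub>M\<^esub>\<rparr>"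

definition pullback :: "'a monoid \<Rightarrow> 'b monoid \<Rightarrow> ('a \<Rightarrow> 's) \<Rightarrow> ('b \<Rightarrow> 's) \<Rightarrow> ('a \<times> 'b) monoid" where
  "pullback M1 M2 f1 f2 =
     (M1 \<times>\<times> M2)\<lparr>carrier := {(x, y). x \<in> carrier M1 \<and> y \<in> carrier M2 \<and> f1 x = f2 y}\<rparr>"

text \<open>The relation \<lhd> on the disjoint union P(S) + (P(N1) + P(N2)) described in the theorem:
lhd_sum S N1 N2 x y means x \<lhd> y.\<close>
fun lhd_sum :: "'s monoid \<Rightarrow> 'a monoid \<Rightarrow> 'b monoid \<Rightarrow> ('s + ('a + 'b)) \<Rightarrow> ('s + ('a + 'b)) \<Rightarrow> bool" where
  "lhd_sum S N1 N2 (Inl s) (Inl t) = lhd S s t"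
| "lhd_sum S N1 N2 (Inr (Inl a)) (Inr (Inl b)) = lhd N1 a b"
| "lhd_sum S N1 N2 (Inr (Inr a)) (Inr (Inr b)) = lhd N2 a b"
| "lhd_sum S N1 N2 (Inr _) (Inl _) = True"
| "lhd_sum S N1 N2 _ _ = False"

end

theory Submission
  imports Defs
begin

text \<open>
  Call an order-ideal N of M absorbing if x + n = x for all x \<notin> N and
  n \<in> N.  The hypothesis on \<lhd> says exactly that every prime outside N absorbs every
  prime of N, and since M is primely generated this makes N absorbing.  For an absorbing
  ideal the quotient M/N merely collapses N to a point: the quotient map f : M \<rightarrow> S is
  injective outside N, the primes of S are the images of the primes of M outside N, the
  primes of N (as a monoid) are the primes of M inside N, and M is primely generated resp.
  a refinement monoid as soon as N and S are.

  For the pullback P of M1 \<rightarrow> S \<leftarrow> M2 the ideal N1 \<times> N2 is again absorbing, as a monoid it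
  is the product of N1 and N2, and its quotient map P \<rightarrow> S is the common image of the two
  coordinates.  Since order-ideals and quotients of primitive monoids and products of
  primitive monoids are primitive, P is primitive; its primes are those of S (outside
  N1 \<times> N2) together with those of the product N1 \<times> N2, i.e. (a, 0) and (0, b) for primes a
  of N1 and b of N2, and the relation \<lhd> is computed piece by piece.
\<close>

lemma lsum_Nil [simp]: "lsum M [] = \<one>\<^bsub>M\<^esub>"
  by (simp add: lsum_def)

lemma lsum_Cons [simp]: "lsum M (x # xs) = x \<otimes>\<^bsub>M\<^esub> lsum M xs"
  by (simp add: lsum_def)

lemma submon_simps [simp]:
  "carrier (submon M N) = N" "mult (submon M N) = mult M" "one (submon M N) = one M"
  by (simp_all add: submon_def)

lemma lsum_submon [simp]: "lsum (submon M N) = lsum M"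
  by (simp add: lsum_def fun_eq_iff)

lemma lhd_submon [simp]: "lhd (submon M N) = lhd M"
  by (simp add: lhd_def fun_eq_iff)

lemma primes_carrier: "p \<in> primes M \<Longrightarrow> p \<in> carrier M"
  by (simp add: primes_def is_prime_def)

lemma primes_subset_carrier: "primes M \<subseteq> carrier M"
  by (auto simp: primes_def is_prime_def)

lemma aleq_refl: "monoid M \<Longrightarrow> x \<in> carrier M \<Longrightarrow> aleq M x x"
  unfolding aleq_def by (metis monoid.one_closed monoid.r_one)

lemma aleq_one: "monoid M \<Longrightarrow> x \<in> carrier M \<Longrightarrow> aleq M \<one>\<^bsub>M\<^esub> x"
  unfolding aleq_def by (metis monoid.l_one)

lemma prime_not_one: "monoid M \<Longrightarrow> is_prime M p \<Longrightarrow> p \<noteq> \<one>\<^bsub>M\<^esub>"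
  unfolding is_prime_def using aleq_refl monoid.one_closed by metis

lemma antisymmetric_conical:
  "monoid M \<Longrightarrow> antisymmetric_monoid M \<Longrightarrow> x \<in> carrier M \<Longrightarrow> aleq M x \<one>\<^bsub>M\<^esub> \<Longrightarrow> x = \<one>\<^bsub>M\<^esub>"
  unfolding antisymmetric_monoid_def using aleq_one monoid.one_closed by metis

text \<open>Shrinking the carrier of a monoid only shrinks its algebraic preorder, so
antisymmetry is inherited by submonoids, order-ideals and pullbacks alike.\<close>
lemma antisymmetric_carrier_update:
  assumes "C \<subseteq> carrier G" and "antisymmetric_monoid G"
  shows "antisymmetric_monoid (G\<lparr>carrier := C\<rparr>)"
proof -
  have le: "aleq G x y" if "aleq (G\<lparr>carrier := C\<rparr>) x y" for x y
    using that assms(1) unfolding aleq_def by auto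
  show ?thesis unfolding antisymmetric_monoid_def
  proof (intro ballI impI)
    fix x y assume "x \<in> carrier (G\<lparr>carrier := C\<rparr>)" "y \<in> carrier (G\<lparr>carrier := C\<rparr>)"
      and "aleq (G\<lparr>carrier := C\<rparr>) x y \<and> aleq (G\<lparr>carrier := C\<rparr>) y x"
    then show "x = y"
      using le assms(1) assms(2)[unfolded antisymmetric_monoid_def] by (simp add: subset_iff)
  qed
qed

definition refines :: "'a monoid \<Rightarrow> 'a \<Rightarrow> 'a \<Rightarrow> 'a \<Rightarrow> 'a \<Rightarrow> bool" where
  "refines M a0 a1 b0 b1 \<longleftrightarrow>
     (\<exists>c00\<in>carrier M. \<exists>c01\<in>carrier M. \<exists>c10\<in>carrier M. \<exists>c11\<in>carrier M.
        a0 = c00 \<otimes>\<^bsub>M\<^esub> c01 \<and> a1 = c10 \<otimes>\<^bsub>M\<^esub> c11 \<and>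
        b0 = c00 \<otimes>\<^bsub>M\<^esub> c10 \<and> b1 = c01 \<otimes>\<^bsub>M\<^esub> c11)"

lemma refinesI:
  "c00 \<in> carrier M \<Longrightarrow> c01 \<in> carrier M \<Longrightarrow> c10 \<in> carrier M \<Longrightarrow> c11 \<in> carrier M \<Longrightarrow>
   a0 = c00 \<otimes>\<^bsub>M\<^esub> c01 \<Longrightarrow> a1 = c10 \<otimes>\<^bsub>M\<^esub> c11 \<Longrightarrow>
   b0 = c00 \<otimes>\<^bsub>M\<^esub> c10 \<Longrightarrow> b1 = c01 \<otimes>\<^bsub>M\<^esub> c11 \<Longrightarrow> refines M a0 a1 b0 b1"
  unfolding refines_def by blast

lemma refinement_iff:
  "refinement_monoid M \<longleftrightarrow> (\<forall>a0\<in>carrier M. \<forall>a1\<in>carrier M. \<forall>b0\<in>carrier M. \<forall>b1\<in>carrier M.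
     a0 \<otimes>\<^bsub>M\<^esub> a1 = b0 \<otimes>\<^bsub>M\<^esub> b1 \<longrightarrow> refines M a0 a1 b0 b1)"
  unfolding refinement_monoid_def refines_def by simp

lemma refinesD:
  "refinement_monoid M \<Longrightarrow> a0 \<in> carrier M \<Longrightarrow> a1 \<in> carrier M \<Longrightarrow> b0 \<in> carrier M \<Longrightarrow>
   b1 \<in> carrier M \<Longrightarrow> a0 \<otimes>\<^bsub>M\<^esub> a1 = b0 \<otimes>\<^bsub>M\<^esub> b1 \<Longrightarrow> refines M a0 a1 b0 b1"
  unfolding refinement_iff by blast

lemma refines_transpose: "refines M a0 a1 b0 b1 \<Longrightarrow> refines M b0 b1 a0 a1"
  unfolding refines_def by blast

lemma bij_betw_sum_if:
  assumes f: "bij_betw f (A - B) C" and g: "bij_betw g B D" and "B \<subseteq> A"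
  shows "bij_betw (\<lambda>x. if x \<in> B then Inr (g x) else Inl (f x)) A (Inl ` C \<union> Inr ` D)"
proof -
  let ?h = "\<lambda>x. if x \<in> B then Inr (g x) else Inl (f x)"
  have "bij_betw (Inl \<circ> f) (A - B) (Inl ` C)"
    using f by (rule bij_betw_trans) (simp add: bij_betw_def)
  then have left: "bij_betw ?h (A - B) (Inl ` C)" by (rule bij_betw_cong[THEN iffD1, rotated]) simp
  have "bij_betw (Inr \<circ> g) B (Inr ` D)"
    using g by (rule bij_betw_trans) (simp add: bij_betw_def)
  then have right: "bij_betw ?h B (Inr ` D)" by (rule bij_betw_cong[THEN iffD1, rotated]) simp
  have "bij_betw ?h ((A - B) \<union> B) (Inl ` C \<union> Inr ` D)"
    by (rule bij_betw_combine[OF left right]) auto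
  then show ?thesis using assms(3) by (simp add: Un_absorb2)
qed

context
  fixes M :: "'a monoid" (structure)
  assumes M: "comm_monoid M"
begin

interpretation comm_monoid M by (fact M)

lemma lsum_closed: "set xs \<subseteq> carrier M \<Longrightarrow> lsum M xs \<in> carrier M"
  by (induction xs) auto

lemma lsum_append:
  "set xs \<subseteq> carrier M \<Longrightarrow> set ys \<subseteq> carrier M \<Longrightarrow> lsum M (xs @ ys) = lsum M xs \<otimes> lsum M ys"
  by (induction xs) (auto simp: lsum_closed m_assoc)

lemma lsum_ones: "lsum M (map (\<lambda>_. \<one>) xs) = \<one>"
  by (induction xs) auto

lemma lsum_member:
  "set xs \<subseteq> carrier M \<Longrightarrow> q \<in> set xs \<Longrightarrow> \<exists>r\<in>carrier M. lsum M xs = q \<otimes> r"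
proof (induction xs)
  case (Cons a xs)
  show ?case
  proof (cases "q = a")
    case False
    then obtain r where "r \<in> carrier M" "lsum M xs = q \<otimes> r" using Cons by auto
    then show ?thesis using Cons.prems by (intro bexI[of _ "a \<otimes> r"]) (auto simp: m_lcomm)
  qed (use Cons.prems lsum_closed in auto)
qed simp

lemma lsum_absorbed:
  assumes "x \<in> carrier M" and "set ns \<subseteq> carrier M" and "\<And>n. n \<in> set ns \<Longrightarrow> x \<otimes> n = x"
  shows "x \<otimes> lsum M ns = x"
  using assms(2,3)
proof (induction ns)
  case (Cons n ns)
  have "x \<otimes> lsum M (n # ns) = (x \<otimes> n) \<otimes> lsum M ns"
    using assms(1) Cons.prems(1) lsum_closed by (simp add: m_assoc)
  also have "\<dots> = x \<otimes> lsum M ns" using Cons.prems(2) by simp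
  also have "\<dots> = x" using Cons by simp
  finally show ?case .
qed (use assms(1) in simp)

lemma refines_swap: "refines M a0 a1 b0 b1 \<Longrightarrow> refines M a1 a0 b0 b1"
  unfolding refines_def by (metis m_comm)

lemma lsum_hom:
  assumes "f \<in> hom M S" and "f \<one> = \<one>\<^bsub>S\<^esub>" and "set xs \<subseteq> carrier M"
  shows "f (lsum M xs) = lsum S (map f xs)"
  using assms(3) by (induction xs) (use assms(1,2) lsum_closed in \<open>auto simp: hom_def\<close>)

end

section \<open>Direct products\<close>

lemma aleq_DirProd: "aleq (A \<times>\<times> B) (x, y) (u, v) \<longleftrightarrow> aleq A x u \<and> aleq B y v"
  unfolding aleq_def by auto

lemma lsum_DirProd: "lsum (A \<times>\<times> B) zs = (lsum A (map fst zs), lsum B (map snd zs))"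
  by (induction zs) (auto simp: mult_DirProd')

lemma comm_monoid_DirProd:
  assumes A: "comm_monoid A" and B: "comm_monoid B"
  shows "comm_monoid (A \<times>\<times> B)"
proof -
  interpret A: comm_monoid A by (fact A)
  interpret B: comm_monoid B by (fact B)
  show ?thesis
    by (unfold_locales) (auto simp: mult_DirProd' A.m_ac B.m_ac)
qed

lemma prime_DirProd_left:
  fixes A :: "'a monoid" and B :: "'b monoid"
  assumes "monoid A" and "monoid B" and "a \<in> carrier A"
  shows "is_prime (A \<times>\<times> B) (a, \<one>\<^bsub>B\<^esub>) \<longleftrightarrow> is_prime A a"
  using assms unfolding is_prime_def
  by (auto simp: aleq_DirProd aleq_one monoid.m_closed monoid.one_closed mult_DirProd')

lemma prime_DirProd_right:
  fixes A :: "'a monoid" and B :: "'b monoid"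
  assumes "monoid A" and "monoid B" and "b \<in> carrier B"
  shows "is_prime (A \<times>\<times> B) (\<one>\<^bsub>A\<^esub>, b) \<longleftrightarrow> is_prime B b"
  using assms unfolding is_prime_def
  by (auto simp: aleq_DirProd aleq_one monoid.m_closed monoid.one_closed mult_DirProd')

lemma primes_DirProd:
  fixes A :: "'a monoid" and B :: "'b monoid"
  assumes A: "comm_monoid A" "antisymmetric_monoid A"
    and B: "comm_monoid B" "antisymmetric_monoid B"
  shows "primes (A \<times>\<times> B) = (\<lambda>a. (a, \<one>\<^bsub>B\<^esub>)) ` primes A \<union> (\<lambda>b. (\<one>\<^bsub>A\<^esub>, b)) ` primes B"
proof -
  interpret A: comm_monoid A by (fact A(1))
  interpret B: comm_monoid B by (fact B(1))
  have "p \<in> (\<lambda>a. (a, \<one>\<^bsub>B\<^esub>)) ` primes A \<union> (\<lambda>b. (\<one>\<^bsub>A\<^esub>, b)) ` primes B"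
    if p: "is_prime (A \<times>\<times> B) p" for p
  proof -
    obtain a b where ab: "p = (a, b)" "a \<in> carrier A" "b \<in> carrier B"
      using p by (cases p) (auto simp: is_prime_def)
    have "p = (a, \<one>\<^bsub>B\<^esub>) \<otimes>\<^bsub>A \<times>\<times> B\<^esub> (\<one>\<^bsub>A\<^esub>, b)"
      using ab by simp
    then have "aleq (A \<times>\<times> B) p (a, \<one>\<^bsub>B\<^esub>) \<or> aleq (A \<times>\<times> B) p (\<one>\<^bsub>A\<^esub>, b)"
      using p ab aleq_refl[OF DirProd_monoid[OF A.monoid_axioms B.monoid_axioms]]
      unfolding is_prime_def by (metis A.one_closed B.one_closed SigmaI carrier_DirProd)
    then have "aleq B b \<one>\<^bsub>B\<^esub> \<or> aleq A a \<one>\<^bsub>A\<^esub>"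
      using ab by (auto simp: aleq_DirProd)
    then have "b = \<one>\<^bsub>B\<^esub> \<or> a = \<one>\<^bsub>A\<^esub>"
      using ab antisymmetric_conical[OF A.monoid_axioms A(2)]
        antisymmetric_conical[OF B.monoid_axioms B(2)] by blast
    then show ?thesis
      using p ab prime_DirProd_left[OF A.monoid_axioms B.monoid_axioms]
        prime_DirProd_right[OF A.monoid_axioms B.monoid_axioms]
      by (auto simp: primes_def)
  qed
  moreover have "(a, \<one>\<^bsub>B\<^esub>) \<in> primes (A \<times>\<times> B)" if "a \<in> primes A" for a
    using that primes_carrier[of a A] prime_DirProd_left[OF A.monoid_axioms B.monoid_axioms]
    by (simp add: primes_def)
  moreover have "(\<one>\<^bsub>A\<^esub>, b) \<in> primes (A \<times>\<times> B)" if "b \<in> primes B" for b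
    using that primes_carrier[of b B] prime_DirProd_right[OF A.monoid_axioms B.monoid_axioms]
    by (simp add: primes_def)
  ultimately show ?thesis by (auto simp: primes_def)
qed


lemma bij_betw_DirProd_label:
  fixes A :: "'a monoid" and B :: "'b monoid"
  assumes "\<one>\<^bsub>B\<^esub> \<notin> Q"
  shows "bij_betw (\<lambda>z. if snd z = \<one>\<^bsub>B\<^esub> then Inl (fst z) else Inr (snd z))
    ((\<lambda>a. (a, \<one>\<^bsub>B\<^esub>)) ` P \<union> (\<lambda>b. (\<one>\<^bsub>A\<^esub>, b)) ` Q) (Inl ` P \<union> Inr ` Q)"
proof -
  let ?h = "\<lambda>z. if snd z = \<one>\<^bsub>B\<^esub> then Inl (fst z) else Inr (snd z)"
  have "?h ` ((\<lambda>a. (a, \<one>\<^bsub>B\<^esub>)) ` P) = Inl ` P"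
    unfolding image_image by (intro image_cong) auto
  moreover have "?h ` ((\<lambda>b. (\<one>\<^bsub>A\<^esub>, b)) ` Q) = Inr ` Q"
    unfolding image_image using assms by (intro image_cong) auto
  moreover have "inj_on ?h ((\<lambda>a. (a, \<one>\<^bsub>B\<^esub>)) ` P \<union> (\<lambda>b. (\<one>\<^bsub>A\<^esub>, b)) ` Q)"
    by (rule inj_on_inverseI[where g="case_sum (\<lambda>a. (a, \<one>\<^bsub>B\<^esub>)) (\<lambda>b. (\<one>\<^bsub>A\<^esub>, b))"])
      (use assms in auto)
  ultimately show ?thesis by (simp only: bij_betw_def image_Un)
qed

lemma primely_generated_DirProd:
  fixes A :: "'a monoid" and B :: "'b monoid"
  assumes A: "comm_monoid A" "antisymmetric_monoid A" "primely_generated A"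
    and B: "comm_monoid B" "antisymmetric_monoid B" "primely_generated B"
  shows "primely_generated (A \<times>\<times> B)"
  unfolding primely_generated_def
proof
  interpret A: comm_monoid A by (fact A(1))
  interpret B: comm_monoid B by (fact B(1))
  fix z assume "z \<in> carrier (A \<times>\<times> B)"
  then have "fst z \<in> carrier A" "snd z \<in> carrier B" by auto
  then obtain xs ys where xs: "set xs \<subseteq> primes A" "fst z = lsum A xs"
    and ys: "set ys \<subseteq> primes B" "snd z = lsum B ys"
    using A(3) B(3) unfolding primely_generated_def by meson
  define zs where "zs = map (\<lambda>a. (a, \<one>\<^bsub>B\<^esub>)) xs @ map (\<lambda>b. (\<one>\<^bsub>A\<^esub>, b)) ys"
  have "set zs \<subseteq> (\<lambda>a. (a, \<one>\<^bsub>B\<^esub>)) ` primes A \<union> (\<lambda>b. (\<one>\<^bsub>A\<^esub>, b)) ` primes B"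
    using xs ys unfolding zs_def by auto
  then have "set zs \<subseteq> primes (A \<times>\<times> B)"
    by (simp only: primes_DirProd[OF A(1,2) B(1,2)])
  moreover have "z = lsum (A \<times>\<times> B) zs"
  proof -
    have "set xs \<subseteq> carrier A" using xs(1) primes_subset_carrier by (rule order_trans)
    moreover have "set ys \<subseteq> carrier B" using ys(1) primes_subset_carrier by (rule order_trans)
    ultimately have "lsum A (xs @ map (\<lambda>_. \<one>\<^bsub>A\<^esub>) ys) = fst z"
      and "lsum B (map (\<lambda>_. \<one>\<^bsub>B\<^esub>) xs @ ys) = snd z"
      using xs(2) ys(2) A(1) B(1)
      by (simp_all add: lsum_append lsum_ones lsum_closed image_subset_iff)
    then show ?thesis
      by (simp add: zs_def lsum_DirProd comp_def prod_eq_iff)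
  qed
  ultimately show "\<exists>zs. set zs \<subseteq> primes (A \<times>\<times> B) \<and> z = lsum (A \<times>\<times> B) zs" by blast
qed

lemma refinement_DirProd:
  fixes A :: "'a monoid" and B :: "'b monoid"
  assumes A: "refinement_monoid A" and B: "refinement_monoid B"
  shows "refinement_monoid (A \<times>\<times> B)"
  unfolding refinement_iff
proof (intro ballI impI)
  fix a0 a1 b0 b1 assume ab: "a0 \<in> carrier (A \<times>\<times> B)" "a1 \<in> carrier (A \<times>\<times> B)"
    "b0 \<in> carrier (A \<times>\<times> B)" "b1 \<in> carrier (A \<times>\<times> B)"
    and e: "a0 \<otimes>\<^bsub>A \<times>\<times> B\<^esub> a1 = b0 \<otimes>\<^bsub>A \<times>\<times> B\<^esub> b1"
  have "refines A (fst a0) (fst a1) (fst b0) (fst b1)"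
    using A ab e by (intro refinesD) (auto simp: mult_DirProd' prod_eq_iff)
  then obtain c00 c01 c10 c11
    where c: "c00 \<in> carrier A" "c01 \<in> carrier A" "c10 \<in> carrier A" "c11 \<in> carrier A"
      "fst a0 = c00 \<otimes>\<^bsub>A\<^esub> c01" "fst a1 = c10 \<otimes>\<^bsub>A\<^esub> c11"
      "fst b0 = c00 \<otimes>\<^bsub>A\<^esub> c10" "fst b1 = c01 \<otimes>\<^bsub>A\<^esub> c11"
    unfolding refines_def by blast
  have "refines B (snd a0) (snd a1) (snd b0) (snd b1)"
    using B ab e by (intro refinesD) (auto simp: mult_DirProd' prod_eq_iff)
  then obtain d00 d01 d10 d11
    where d: "d00 \<in> carrier B" "d01 \<in> carrier B" "d10 \<in> carrier B" "d11 \<in> carrier B"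
      "snd a0 = d00 \<otimes>\<^bsub>B\<^esub> d01" "snd a1 = d10 \<otimes>\<^bsub>B\<^esub> d11"
      "snd b0 = d00 \<otimes>\<^bsub>B\<^esub> d10" "snd b1 = d01 \<otimes>\<^bsub>B\<^esub> d11"
    unfolding refines_def by blast
  show "refines (A \<times>\<times> B) a0 a1 b0 b1"
    by (rule refinesI[of "(c00, d00)" _ "(c01, d01)" "(c10, d10)" "(c11, d11)"])
      (use c d in \<open>auto simp: prod_eq_iff\<close>)
qed

lemma antisymmetric_DirProd:
  "antisymmetric_monoid A \<Longrightarrow> antisymmetric_monoid B \<Longrightarrow> antisymmetric_monoid (A \<times>\<times> B)"
  unfolding antisymmetric_monoid_def by (auto simp: aleq_DirProd)

lemma primitive_DirProd:
  fixes A :: "'a monoid" and B :: "'b monoid"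
  assumes "primitive A" and "primitive B"
  shows "primitive (A \<times>\<times> B)"
  using assms comm_monoid_DirProd primely_generated_DirProd antisymmetric_DirProd
    refinement_DirProd
  unfolding primitive_def by blast

section \<open>Order-ideals and the quotient M/N\<close>

locale ord_ideal = comm_monoid M for M :: "'a monoid" (structure) +
  fixes N :: "'a set"
  assumes order_ideal: "order_ideal M N"
begin

lemma N_subset: "N \<subseteq> carrier M"
  using order_ideal by (simp add: order_ideal_def)

lemma N_carrier: "x \<in> N \<Longrightarrow> x \<in> carrier M"
  using N_subset by blast

lemma mult_N: "x \<in> carrier M \<Longrightarrow> y \<in> carrier M \<Longrightarrow> x \<otimes> y \<in> N \<longleftrightarrow> x \<in> N \<and> y \<in> N"
  using order_ideal by (simp add: order_ideal_def)

lemma one_N: "\<one> \<in> N"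
proof -
  obtain n where "n \<in> N" using order_ideal by (auto simp: order_ideal_def)
  then show ?thesis using mult_N[of n \<one>] N_carrier by auto
qed

lemma lsum_N: "set xs \<subseteq> carrier M \<Longrightarrow> lsum M xs \<in> N \<longleftrightarrow> set xs \<subseteq> N"
  by (induction xs) (auto simp: lsum_closed[OF comm_monoid_axioms] mult_N one_N)

lemma qcong_refl: "x \<in> carrier M \<Longrightarrow> qcong M N x x"
  unfolding qcong_def using one_N by blast

lemma qcong_sym: "qcong M N x y \<Longrightarrow> qcong M N y x"
  unfolding qcong_def by metis

lemma qcong_trans:
  assumes "x \<in> carrier M" "y \<in> carrier M" "z \<in> carrier M" "qcong M N x y" "qcong M N y z"
  shows "qcong M N x z"
proof -
  obtain u v u' v' where uv: "u \<in> N" "v \<in> N" "u' \<in> N" "v' \<in> N"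
    "x \<otimes> u = y \<otimes> v" "y \<otimes> u' = z \<otimes> v'"
    using assms unfolding qcong_def by blast
  have c: "u \<in> carrier M" "v \<in> carrier M" "u' \<in> carrier M" "v' \<in> carrier M"
    using uv N_carrier by auto
  have "x \<otimes> (u \<otimes> u') = (x \<otimes> u) \<otimes> u'" using c assms by (simp add: m_assoc)
  also have "\<dots> = (y \<otimes> v) \<otimes> u'" using uv by simp
  also have "\<dots> = (y \<otimes> u') \<otimes> v" using c assms by (simp add: m_ac)
  also have "\<dots> = z \<otimes> (v' \<otimes> v)" using uv c assms by (simp add: m_assoc)
  finally show ?thesis unfolding qcong_def using uv c mult_N by blast
qed

lemma qcong_mult:
  assumes "x \<in> carrier M" "y \<in> carrier M" "a \<in> carrier M" "b \<in> carrier M"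
    "qcong M N x a" "qcong M N y b"
  shows "qcong M N (x \<otimes> y) (a \<otimes> b)"
proof -
  obtain u v u' v' where uv: "u \<in> N" "v \<in> N" "u' \<in> N" "v' \<in> N"
    "x \<otimes> u = a \<otimes> v" "y \<otimes> u' = b \<otimes> v'"
    using assms unfolding qcong_def by blast
  have c: "u \<in> carrier M" "v \<in> carrier M" "u' \<in> carrier M" "v' \<in> carrier M"
    using uv N_carrier by auto
  have "(x \<otimes> y) \<otimes> (u \<otimes> u') = (x \<otimes> u) \<otimes> (y \<otimes> u')" using c assms by (simp add: m_ac)
  also have "\<dots> = (a \<otimes> b) \<otimes> (v \<otimes> v')" using uv c assms by (simp add: m_ac)
  finally show ?thesis unfolding qcong_def using uv c mult_N by blast
qed

lemma qcong_one: "x \<in> carrier M \<Longrightarrow> qcong M N x \<one> \<longleftrightarrow> x \<in> N"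
  unfolding qcong_def using mult_N N_carrier one_N by (metis l_one m_comm one_closed)

lemma qclass_self: "x \<in> carrier M \<Longrightarrow> x \<in> qclass M N x"
  unfolding qclass_def using qcong_refl by auto

lemma qclass_eq:
  assumes "x \<in> carrier M" "y \<in> carrier M"
  shows "qclass M N x = qclass M N y \<longleftrightarrow> qcong M N x y"
proof
  assume "qclass M N x = qclass M N y"
  then have "y \<in> qclass M N x" using qclass_self assms by auto
  then show "qcong M N x y" by (simp add: qclass_def)
next
  assume "qcong M N x y"
  then show "qclass M N x = qclass M N y"
    unfolding qclass_def using qcong_sym qcong_trans assms by blast
qed

lemma qclass_mult:
  assumes "x \<in> carrier M" "y \<in> carrier M"
  shows "qclass M N x \<otimes>\<^bsub>quot M N\<^esub> qclass M N y = qclass M N (x \<otimes> y)"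
proof -
  define a where "a = (SOME a. a \<in> qclass M N x)"
  define b where "b = (SOME b. b \<in> qclass M N y)"
  have "a \<in> qclass M N x" unfolding a_def using qclass_self assms by (metis someI)
  then have a: "a \<in> carrier M" "qcong M N x a" by (auto simp: qclass_def)
  have "b \<in> qclass M N y" unfolding b_def using qclass_self assms by (metis someI)
  then have b: "b \<in> carrier M" "qcong M N y b" by (auto simp: qclass_def)
  have "qcong M N (x \<otimes> y) (a \<otimes> b)" using qcong_mult a b assms by auto
  then have "qclass M N (a \<otimes> b) = qclass M N (x \<otimes> y)"
    using qclass_eq a b assms by (metis m_closed qcong_sym)
  then show ?thesis unfolding quot_def a_def b_def by simp
qed

lemma carrier_quot: "carrier (quot M N) = qclass M N ` carrier M"
  by (simp add: quot_def)

lemma quot_iso_of_quotient_map: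
  assumes f_hom: "f \<in> hom M S" and f_onto: "f ` carrier M = carrier S"
    and f_eq: "\<And>x y. x \<in> carrier M \<Longrightarrow> y \<in> carrier M \<Longrightarrow> f x = f y \<longleftrightarrow> qcong M N x y"
  defines "\<chi> \<equiv> \<lambda>A. f (SOME a. a \<in> A)"
  shows "\<chi> \<in> iso (quot M N) S" and "\<And>x. x \<in> carrier M \<Longrightarrow> \<chi> (qclass M N x) = f x"
proof -
  show chi: "\<chi> (qclass M N x) = f x" if x: "x \<in> carrier M" for x
  proof -
    have "(SOME a. a \<in> qclass M N x) \<in> qclass M N x" using qclass_self[OF x] by (rule someI)
    then show ?thesis unfolding \<chi>_def qclass_def using f_eq x qcong_sym by auto
  qed
  have "\<chi> \<in> hom (quot M N) S"
  proof (rule homI)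
    fix A assume "A \<in> carrier (quot M N)"
    then show "\<chi> A \<in> carrier S" using chi f_onto by (auto simp: carrier_quot)
  next
    fix A B assume "A \<in> carrier (quot M N)" "B \<in> carrier (quot M N)"
    then obtain x y where "x \<in> carrier M" "A = qclass M N x" "y \<in> carrier M" "B = qclass M N y"
      by (auto simp: carrier_quot)
    then show "\<chi> (A \<otimes>\<^bsub>quot M N\<^esub> B) = \<chi> A \<otimes>\<^bsub>S\<^esub> \<chi> B"
      using chi f_hom qclass_mult by (simp add: hom_mult)
  qed
  moreover have "inj_on \<chi> (carrier (quot M N))"
  proof (rule inj_onI)
    fix A B assume "A \<in> carrier (quot M N)" "B \<in> carrier (quot M N)" and eq: "\<chi> A = \<chi> B"
    then obtain x y where xy: "x \<in> carrier M" "A = qclass M N x" "y \<in> carrier M" "B = qclass M N y"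
      by (auto simp: carrier_quot)
    then have "f x = f y" using eq chi by simp
    then show "A = B" using xy f_eq qclass_eq by simp
  qed
  moreover have "\<chi> ` carrier (quot M N) = carrier S"
    using image_cong[OF refl chi, of "carrier M"] f_onto by (simp add: carrier_quot image_image)
  ultimately show "\<chi> \<in> iso (quot M N) S" by (simp add: iso_def bij_betw_def)
qed

lemma quotient_map_of_quot_iso:
  assumes \<phi>: "\<phi> \<in> iso (quot M N) S"
  shows "(\<lambda>x. \<phi> (qclass M N x)) \<in> hom M S"
    and "(\<lambda>x. \<phi> (qclass M N x)) ` carrier M = carrier S"
    and "\<And>x y. x \<in> carrier M \<Longrightarrow> y \<in> carrier M \<Longrightarrow>
           \<phi> (qclass M N x) = \<phi> (qclass M N y) \<longleftrightarrow> qcong M N x y"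
proof -
  have hom: "\<phi> \<in> hom (quot M N) S" and inj: "inj_on \<phi> (carrier (quot M N))"
    and onto: "\<phi> ` carrier (quot M N) = carrier S"
    using \<phi> by (auto simp: iso_def bij_betw_def)
  have qc: "qclass M N x \<in> carrier (quot M N)" if "x \<in> carrier M" for x
    using that by (simp add: carrier_quot)
  show "(\<lambda>x. \<phi> (qclass M N x)) \<in> hom M S"
    by (rule homI) (use hom qc in \<open>auto simp: qclass_mult[symmetric] hom_mult hom_in_carrier\<close>)
  show "(\<lambda>x. \<phi> (qclass M N x)) ` carrier M = carrier S"
    using onto by (simp add: carrier_quot image_image)
  show "\<phi> (qclass M N x) = \<phi> (qclass M N y) \<longleftrightarrow> qcong M N x y"
    if "x \<in> carrier M" "y \<in> carrier M" for x y
    using inj qc that qclass_eq unfolding inj_on_def by metis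
qed

lemma aleq_submon_iff: "x \<in> N \<Longrightarrow> y \<in> N \<Longrightarrow> aleq (submon M N) x y \<longleftrightarrow> aleq M x y"
  unfolding aleq_def using mult_N N_carrier by auto

lemma prime_submon: assumes "p \<in> primes M" "p \<in> N" shows "p \<in> primes (submon M N)"
proof -
  have p: "is_prime M p" using assms by (simp add: primes_def)
  have "aleq (submon M N) p a \<or> aleq (submon M N) p b"
    if "a \<in> N" "b \<in> N" "aleq (submon M N) p (a \<otimes> b)" for a b
    using that p assms(2) aleq_submon_iff mult_N N_carrier unfolding is_prime_def by auto
  then show ?thesis
    using p assms aleq_submon_iff one_N by (simp add: primes_def is_prime_def)
qed

lemma comm_monoid_submon: "comm_monoid (submon M N)"
  by unfold_locales (auto simp: mult_N one_N N_carrier m_ac)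

lemma one_notin_primes_submon: "\<one> \<notin> primes (submon M N)"
  using prime_not_one[OF comm_monoid.axioms(1)[OF comm_monoid_submon]] by (auto simp: primes_def)

lemma antisymmetric_submon: "antisymmetric_monoid M \<Longrightarrow> antisymmetric_monoid (submon M N)"
  unfolding submon_def using N_subset by (rule antisymmetric_carrier_update)

text \<open>Order-ideals of primitive monoids are primitive: an element of N is a sum of
primes of M, all of which lie in N, and the terms of a refinement of an equation in N
again lie in N.\<close>
lemma primely_generated_submon:
  assumes "primely_generated M"
  shows "primely_generated (submon M N)"
  unfolding primely_generated_def
proof
  fix x assume x: "x \<in> carrier (submon M N)"
  then obtain xs where xs: "set xs \<subseteq> primes M" "x = lsum M xs"
    using assms N_carrier unfolding primely_generated_def by force
  have "set xs \<subseteq> carrier M" using xs(1) primes_subset_carrier by (rule order_trans)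
  then have "set xs \<subseteq> N" using xs(2) x lsum_N by simp
  then show "\<exists>xs. set xs \<subseteq> primes (submon M N) \<and> x = lsum (submon M N) xs"
    using xs prime_submon by (intro exI[of _ xs]) auto
qed

lemma refinement_submon:
  assumes "refinement_monoid M"
  shows "refinement_monoid (submon M N)"
  unfolding refinement_iff
proof (intro ballI impI)
  fix a0 a1 b0 b1 assume ab: "a0 \<in> carrier (submon M N)" "a1 \<in> carrier (submon M N)"
    "b0 \<in> carrier (submon M N)" "b1 \<in> carrier (submon M N)"
    and "a0 \<otimes>\<^bsub>submon M N\<^esub> a1 = b0 \<otimes>\<^bsub>submon M N\<^esub> b1"
  then have "refines M a0 a1 b0 b1"
    using assms N_carrier by (intro refinesD) auto
  then obtain c00 c01 c10 c11 where c: "c00 \<in> carrier M" "c01 \<in> carrier M"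
    "c10 \<in> carrier M" "c11 \<in> carrier M"
    "a0 = c00 \<otimes> c01" "a1 = c10 \<otimes> c11" "b0 = c00 \<otimes> c10" "b1 = c01 \<otimes> c11"
    unfolding refines_def by blast
  then have "c00 \<in> N" "c01 \<in> N" "c10 \<in> N" "c11 \<in> N"
    using ab mult_N by auto
  then show "refines (submon M N) a0 a1 b0 b1"
    using c by (intro refinesI) simp_all
qed

lemma primitive_submon: "primitive M \<Longrightarrow> primitive (submon M N)"
  using comm_monoid_submon primely_generated_submon antisymmetric_submon refinement_submon
  unfolding primitive_def by blast

end

section \<open>Absorbing ideals\<close>

context ord_ideal
begin

lemma absorbed_if_primes_absorbed:
  assumes pg: "primely_generated M"
    and H: "\<forall>p\<in>primes (submon M N). \<forall>q\<in>primes M - primes (submon M N). lhd M p q"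
    and x: "x \<in> carrier M" "x \<notin> N" and n: "n \<in> N"
  shows "x \<otimes> n = x"
proof -
  obtain xs where xs: "set xs \<subseteq> primes M" "x = lsum M xs"
    using pg x unfolding primely_generated_def by blast
  have xs_carrier: "set xs \<subseteq> carrier M" using xs(1) primes_subset_carrier by (rule order_trans)
  then obtain q where q: "q \<in> set xs" "q \<notin> N" using lsum_N xs(2) x(2) by auto
  then obtain r where r: "r \<in> carrier M" "x = q \<otimes> r"
    using lsum_member[OF comm_monoid_axioms xs_carrier] xs(2) by auto
  have q_outside: "q \<in> primes M - primes (submon M N)"
    using q xs(1) by (auto simp: primes_def is_prime_def)
  obtain ns where ns: "set ns \<subseteq> primes M" "n = lsum M ns"
    using pg n N_carrier unfolding primely_generated_def by blast
  have ns_carrier: "set ns \<subseteq> carrier M" using ns(1) primes_subset_carrier by (rule order_trans)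
  then have ns_N: "set ns \<subseteq> N" using lsum_N ns n by auto
  have "x \<otimes> p = x" if p: "p \<in> set ns" for p
  proof -
    have "q \<otimes> p = q"
      using H q_outside prime_submon p ns(1) ns_N unfolding lhd_def by blast
    moreover have "q \<in> carrier M" "p \<in> carrier M" using p q xs_carrier ns_carrier by auto
    then have "x \<otimes> p = (q \<otimes> p) \<otimes> r" using r by (simp add: m_ac)
    ultimately show ?thesis using r by simp
  qed
  then show ?thesis
    using lsum_absorbed[OF comm_monoid_axioms x(1) ns_carrier] ns(2) by simp
qed

end

locale absorbing = ord_ideal +
  assumes absorb: "x \<in> carrier M \<Longrightarrow> x \<notin> N \<Longrightarrow> n \<in> N \<Longrightarrow> x \<otimes> n = x"
begin

lemma absorb': "x \<in> carrier M \<Longrightarrow> x \<notin> N \<Longrightarrow> n \<in> N \<Longrightarrow> n \<otimes> x = x"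
  using absorb N_carrier m_comm by metis

lemma qcong_iff:
  assumes "x \<in> carrier M" "y \<in> carrier M"
  shows "qcong M N x y \<longleftrightarrow> (x \<in> N \<and> y \<in> N) \<or> x = y"
proof
  assume "qcong M N x y"
  then obtain u v where uv: "u \<in> N" "v \<in> N" "x \<otimes> u = y \<otimes> v" unfolding qcong_def by blast
  then have "x \<in> N \<longleftrightarrow> y \<in> N" using mult_N assms N_carrier by metis
  moreover have "x = y" if "x \<notin> N"
    using that calculation uv absorb assms by metis
  ultimately show "(x \<in> N \<and> y \<in> N) \<or> x = y" by blast
next
  assume "(x \<in> N \<and> y \<in> N) \<or> x = y"
  then show "qcong M N x y"
    using qcong_refl assms m_comm unfolding qcong_def by blast
qed

lemma primes_submon: "primes (submon M N) = primes M \<inter> N"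
proof
  show "primes M \<inter> N \<subseteq> primes (submon M N)" using prime_submon by auto
next
  show "primes (submon M N) \<subseteq> primes M \<inter> N"
  proof
    fix p assume "p \<in> primes (submon M N)"
    then have p: "is_prime (submon M N) p" and pN: "p \<in> N" by (auto simp: primes_def is_prime_def)
    have "aleq M p a \<or> aleq M p b"
      if ab: "a \<in> carrier M" "b \<in> carrier M" "aleq M p (a \<otimes> b)" for a b
    proof (cases "a \<in> N \<and> b \<in> N")
      case True
      then show ?thesis
        using p ab pN aleq_submon_iff mult_N unfolding is_prime_def by auto
    next
      case False
      then have "a = p \<otimes> a \<or> b = p \<otimes> b" using absorb' pN ab by auto
      then show ?thesis using ab unfolding aleq_def by blast
    qed
    then show "p \<in> primes M \<inter> N"
      using p pN N_carrier aleq_submon_iff one_N by (auto simp: primes_def is_prime_def)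
  qed
qed

lemma refines_with_summand_in_N:
  assumes "a0 \<in> N" "a1 \<in> carrier M" "b0 \<in> carrier M" "b1 \<in> carrier M"
    and "a0 \<otimes> a1 \<notin> N" and e: "a0 \<otimes> a1 = b0 \<otimes> b1"
  shows "refines M a0 a1 b0 b1"
proof -
  have "a1 \<notin> N" using assms(1,2,5) mult_N N_carrier by blast
  then have a1: "a1 = b0 \<otimes> b1" using absorb' assms(1,2) e by simp
  show ?thesis
  proof (cases "b1 \<in> N")
    case False
    then show ?thesis
      using assms a1 absorb' N_carrier by (intro refinesI[of \<one> _ a0 b0 b1]) auto
  next
    case True
    then have "b0 \<notin> N" using assms(3,4,5) e mult_N by auto
    then show ?thesis
      using assms a1 absorb' N_carrier by (intro refinesI[of a0 _ \<one> b0 b1]) auto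
  qed
qed

text \<open>By the symmetries of the refinement property, the same holds whichever of the
four terms lies in N.\<close>
lemma refines_with_term_in_N:
  assumes c: "a0 \<in> carrier M" "a1 \<in> carrier M" "b0 \<in> carrier M" "b1 \<in> carrier M"
    and e: "a0 \<otimes> a1 = b0 \<otimes> b1" and outside: "a0 \<otimes> a1 \<notin> N"
    and "a0 \<in> N \<or> a1 \<in> N \<or> b0 \<in> N \<or> b1 \<in> N"
  shows "refines M a0 a1 b0 b1"
proof -
  have outside': "b0 \<otimes> b1 \<notin> N" using outside e by simp
  consider "a0 \<in> N" | "a1 \<in> N" | "b0 \<in> N" | "b1 \<in> N" using assms(7) by blast
  then show ?thesis
  proof cases
    case 1
    then show ?thesis using refines_with_summand_in_N c e outside by blast
  next
    case 2
    then have "refines M a1 a0 b0 b1"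
      using refines_with_summand_in_N c e outside m_comm by simp
    then show ?thesis by (rule refines_swap[OF comm_monoid_axioms])
  next
    case 3
    then have "refines M b0 b1 a0 a1"
      using refines_with_summand_in_N c e outside' by simp
    then show ?thesis by (rule refines_transpose)
  next
    case 4
    then have "refines M b1 b0 a0 a1"
      using refines_with_summand_in_N c e outside' m_comm by simp
    then show ?thesis by (rule refines_transpose[OF refines_swap[OF comm_monoid_axioms]])
  qed
qed

lemma refines_inside_N:
  assumes "refinement_monoid (submon M N)"
    and c: "a0 \<in> carrier M" "a1 \<in> carrier M" "b0 \<in> carrier M" "b1 \<in> carrier M"
    and e: "a0 \<otimes> a1 = b0 \<otimes> b1" and inside: "a0 \<otimes> a1 \<in> N"
  shows "refines M a0 a1 b0 b1"
proof -
  have "b0 \<otimes> b1 \<in> N" using inside e by simp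
  then have "a0 \<in> N" "a1 \<in> N" "b0 \<in> N" "b1 \<in> N"
    using inside c mult_N by blast+
  then have "refines (submon M N) a0 a1 b0 b1" using assms(1) e by (intro refinesD) auto
  then obtain c00 c01 c10 c11 where "c00 \<in> N" "c01 \<in> N" "c10 \<in> N" "c11 \<in> N"
    "a0 = c00 \<otimes> c01" "a1 = c10 \<otimes> c11" "b0 = c00 \<otimes> c10" "b1 = c01 \<otimes> c11"
    unfolding refines_def by auto
  then show ?thesis using N_carrier by (intro refinesI[of c00 _ c01 c10 c11]) auto
qed

lemma refinement_absorbing:
  assumes ref_N: "refinement_monoid (submon M N)"
    and ref_outside: "\<And>a0 a1 b0 b1. a0 \<in> carrier M - N \<Longrightarrow> a1 \<in> carrier M - N \<Longrightarrow>
      b0 \<in> carrier M - N \<Longrightarrow> b1 \<in> carrier M - N \<Longrightarrow> a0 \<otimes> a1 = b0 \<otimes> b1 \<Longrightarrow> refines M a0 a1 b0 b1"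
  shows "refinement_monoid M"
  unfolding refinement_iff
proof (intro ballI impI)
  fix a0 a1 b0 b1 assume c: "a0 \<in> carrier M" "a1 \<in> carrier M" "b0 \<in> carrier M" "b1 \<in> carrier M"
    and e: "a0 \<otimes> a1 = b0 \<otimes> b1"
  consider "a0 \<otimes> a1 \<in> N" | "a0 \<otimes> a1 \<notin> N" "a0 \<in> N \<or> a1 \<in> N \<or> b0 \<in> N \<or> b1 \<in> N"
    | "{a0, a1, b0, b1} \<inter> N = {}" by blast
  then show "refines M a0 a1 b0 b1"
  proof cases
    case 1
    then show ?thesis using refines_inside_N[OF ref_N c e] by blast
  next
    case 2
    then show ?thesis using refines_with_term_in_N[OF c e] by blast
  next
    case 3
    then show ?thesis using ref_outside c e by blast
  qed
qed

lemma lsum_filter_outside: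
  assumes "set xs \<subseteq> carrier M" and "lsum M xs \<notin> N"
  shows "lsum M (filter (\<lambda>p. p \<notin> N) xs) = lsum M xs"
  using assms
proof (induction xs)
  case (Cons a xs)
  have a: "a \<in> carrier M" and xs: "set xs \<subseteq> carrier M" using Cons.prems(1) by auto
  show ?case
  proof (cases "a \<in> N")
    case True
    then have "lsum M xs \<notin> N"
      using Cons.prems(2) a xs mult_N lsum_closed[OF comm_monoid_axioms] by auto
    then show ?thesis using Cons.IH xs a True absorb' lsum_closed[OF comm_monoid_axioms] by simp
  next
    case False
    show ?thesis
    proof (cases "lsum M xs \<in> N")
      case True
      then have "filter (\<lambda>p. p \<notin> N) xs = []" using lsum_N xs by (auto simp: filter_empty_conv)
      then show ?thesis using False True absorb a by simp
    qed (use Cons.IH xs False in simp)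
  qed
qed simp

end

section \<open>Quotient maps of absorbing ideals\<close>

locale quotient_map = absorbing M N for M :: "'a monoid" (structure) and N +
  fixes S :: "'s monoid" and f :: "'a \<Rightarrow> 's"
  assumes S: "comm_monoid S" and f_hom: "f \<in> hom M S"
    and f_onto: "f ` carrier M = carrier S"
    and f_eq: "x \<in> carrier M \<Longrightarrow> y \<in> carrier M \<Longrightarrow> f x = f y \<longleftrightarrow> qcong M N x y"
begin

interpretation S: comm_monoid S by (fact S)

lemma f_closed: "x \<in> carrier M \<Longrightarrow> f x \<in> carrier S"
  using f_hom by (rule hom_in_carrier)

lemma f_mult: "x \<in> carrier M \<Longrightarrow> y \<in> carrier M \<Longrightarrow> f (x \<otimes> y) = f x \<otimes>\<^bsub>S\<^esub> f y"
  using f_hom by (rule hom_mult)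

lemma preimage:
  assumes "s \<in> carrier S" obtains x where "x \<in> carrier M" "f x = s"
  using assms f_onto by (metis imageE)

lemma f_one: "f \<one> = \<one>\<^bsub>S\<^esub>"
proof -
  obtain x where x: "x \<in> carrier M" "f x = \<one>\<^bsub>S\<^esub>" using preimage S.one_closed by blast
  have "f \<one> = f \<one> \<otimes>\<^bsub>S\<^esub> f x" using x(2) f_closed by simp
  also have "\<dots> = f (\<one> \<otimes> x)" using x(1) f_mult[of \<one> x, symmetric] by simp
  also have "\<dots> = f x" using x(1) by simp
  finally show ?thesis using x(2) by (rule trans)
qed

lemma f_one_iff: "x \<in> carrier M \<Longrightarrow> f x = \<one>\<^bsub>S\<^esub> \<longleftrightarrow> x \<in> N"
  using f_eq[of x \<one>] f_one qcong_one by simp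

lemma f_inj: "x \<in> carrier M \<Longrightarrow> y \<in> carrier M \<Longrightarrow> x \<notin> N \<Longrightarrow> f x = f y \<Longrightarrow> x = y"
  using f_eq qcong_iff by simp

lemma f_lsum: "set xs \<subseteq> carrier M \<Longrightarrow> f (lsum M xs) = lsum S (map f xs)"
  by (rule lsum_hom[OF comm_monoid_axioms f_hom f_one])

lemma aleq_f:
  assumes "x \<in> carrier M" "x \<notin> N" "y \<in> carrier M"
  shows "aleq S (f x) (f y) \<longleftrightarrow> aleq M x y"
proof
  assume "aleq S (f x) (f y)"
  then obtain s where s: "s \<in> carrier S" "f y = f x \<otimes>\<^bsub>S\<^esub> s" unfolding aleq_def by blast
  obtain z where z: "z \<in> carrier M" "f z = s" using s(1) by (rule preimage)
  have "x \<otimes> z \<notin> N" using mult_N assms z by simp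
  moreover have "f (x \<otimes> z) = f y" using s z f_mult assms by simp
  ultimately have "y = x \<otimes> z" using f_inj[of "x \<otimes> z" y] assms z by simp
  then show "aleq M x y" using z unfolding aleq_def by blast
next
  assume "aleq M x y"
  then show "aleq S (f x) (f y)" using f_mult f_closed assms unfolding aleq_def by auto
qed

lemma prime_image:
  assumes p: "is_prime M p" "p \<notin> N"
  shows "is_prime S (f p)"
proof -
  have pc: "p \<in> carrier M" using p by (simp add: is_prime_def)
  have "aleq S (f p) a \<or> aleq S (f p) b"
    if ab: "a \<in> carrier S" "b \<in> carrier S" "aleq S (f p) (a \<otimes>\<^bsub>S\<^esub> b)" for a b
  proof -
    obtain a' where a': "a' \<in> carrier M" "f a' = a" using ab(1) by (rule preimage)
    obtain b' where b': "b' \<in> carrier M" "f b' = b" using ab(2) by (rule preimage)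
    have "aleq S (f p) (f (a' \<otimes> b'))" using ab(3) f_mult[OF a'(1) b'(1)] a'(2) b'(2) by simp
    then have "aleq M p (a' \<otimes> b')" using aleq_f[OF pc p(2) m_closed[OF a'(1) b'(1)]] by simp
    then have "aleq M p a' \<or> aleq M p b'" using p(1) a' b' unfolding is_prime_def by blast
    then show ?thesis using aleq_f[OF pc p(2)] a' b' by blast
  qed
  moreover have "\<not> aleq S (f p) \<one>\<^bsub>S\<^esub>"
    using p pc aleq_f[OF pc p(2) one_closed] f_one unfolding is_prime_def by simp
  ultimately show ?thesis using pc f_closed unfolding is_prime_def by blast
qed

lemma prime_preimage:
  assumes x: "x \<in> carrier M" and s: "is_prime S (f x)"
  shows "is_prime M x" and "x \<notin> N"
proof -
  show xN: "x \<notin> N"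
    using prime_not_one[OF S.monoid_axioms s] f_one_iff[OF x] by simp
  have "aleq M x a \<or> aleq M x b"
    if ab: "a \<in> carrier M" "b \<in> carrier M" "aleq M x (a \<otimes> b)" for a b
  proof -
    have "aleq S (f x) (f (a \<otimes> b))" using aleq_f[OF x xN m_closed[OF ab(1,2)]] ab(3) by simp
    then have "aleq S (f x) (f a \<otimes>\<^bsub>S\<^esub> f b)" using f_mult[OF ab(1,2)] by simp
    then have "aleq S (f x) (f a) \<or> aleq S (f x) (f b)" using s f_closed ab unfolding is_prime_def by blast
    then show ?thesis using aleq_f[OF x xN] ab by blast
  qed
  moreover have "\<not> aleq M x \<one>"
    using s x aleq_f[OF x xN one_closed] f_one unfolding is_prime_def by simp
  ultimately show "is_prime M x" using x unfolding is_prime_def by blast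
qed

lemma primes_quotient: "primes S = f ` (primes M - N)"
proof
  show "f ` (primes M - N) \<subseteq> primes S"
    using prime_image by (auto simp: primes_def)
next
  show "primes S \<subseteq> f ` (primes M - N)"
  proof
    fix s assume "s \<in> primes S"
    then have s: "is_prime S s" by (simp add: primes_def)
    then have "s \<in> carrier S" by (simp add: is_prime_def)
    then obtain x where x: "x \<in> carrier M" "f x = s" by (rule preimage)
    then have "x \<in> primes M - N" using prime_preimage[OF x(1)] s by (simp add: primes_def)
    then show "s \<in> f ` (primes M - N)" using x(2) by blast
  qed
qed

lemma bij_betw_primes: "bij_betw f (primes M - N) (primes S)"
proof -
  have "inj_on f (primes M - N)"
    by (rule inj_onI) (metis DiffE f_inj primes_carrier)
  then show ?thesis unfolding bij_betw_def primes_quotient by simp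
qed

lemma lhd_quotient:
  assumes "x \<in> carrier M" "y \<in> carrier M" "y \<notin> N"
  shows "lhd S (f x) (f y) \<longleftrightarrow> lhd M x y"
proof -
  have "lhd S (f x) (f y) \<longleftrightarrow> f (y \<otimes> x) = f y"
    unfolding lhd_def using assms f_mult by simp
  also have "\<dots> \<longleftrightarrow> y \<otimes> x = y"
    using f_inj[OF assms(2) m_closed[OF assms(2,1)] assms(3)] by auto
  finally show ?thesis unfolding lhd_def .
qed

text \<open>S is primely generated if M is: drop the summands in N and map the remaining
primes to S.\<close>
lemma primely_generated_quotient:
  assumes "primely_generated M"
  shows "primely_generated S"
  unfolding primely_generated_def
proof
  fix s assume "s \<in> carrier S"
  then obtain x where x: "x \<in> carrier M" "f x = s" by (rule preimage)
  show "\<exists>ss. set ss \<subseteq> primes S \<and> s = lsum S ss"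
  proof (cases "x \<in> N")
    case True
    then have "s = \<one>\<^bsub>S\<^esub>" using f_one_iff[OF x(1)] x(2) by simp
    then show ?thesis by (intro exI[of _ "[]"]) simp
  next
    case False
    obtain xs where xs: "set xs \<subseteq> primes M" "x = lsum M xs"
      using assms x unfolding primely_generated_def by blast
    define ys where "ys = filter (\<lambda>p. p \<notin> N) xs"
    have xs_carrier: "set xs \<subseteq> carrier M" using xs(1) primes_subset_carrier by (rule order_trans)
    then have "x = lsum M ys" using lsum_filter_outside xs False by (simp add: ys_def)
    moreover have "set ys \<subseteq> carrier M" using xs_carrier by (auto simp: ys_def)
    moreover have "set (map f ys) \<subseteq> primes S"
      using xs(1) by (auto simp: ys_def primes_quotient)
    ultimately show ?thesis using x f_lsum by (intro exI[of _ "map f ys"]) simp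
  qed
qed

text \<open>S is a refinement monoid if M is: lift an equation of S to M; either the lifted
sums agree, and a refinement in M maps to one in S, or both lie in N and everything is 0.\<close>
lemma refinement_quotient:
  assumes "refinement_monoid M"
  shows "refinement_monoid S"
  unfolding refinement_iff
proof (intro ballI impI)
  fix s0 s1 t0 t1 assume st: "s0 \<in> carrier S" "s1 \<in> carrier S" "t0 \<in> carrier S" "t1 \<in> carrier S"
    and e: "s0 \<otimes>\<^bsub>S\<^esub> s1 = t0 \<otimes>\<^bsub>S\<^esub> t1"
  obtain x0 where x0: "x0 \<in> carrier M" "f x0 = s0" using st(1) by (rule preimage)
  obtain x1 where x1: "x1 \<in> carrier M" "f x1 = s1" using st(2) by (rule preimage)
  obtain y0 where y0: "y0 \<in> carrier M" "f y0 = t0" using st(3) by (rule preimage)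
  obtain y1 where y1: "y1 \<in> carrier M" "f y1 = t1" using st(4) by (rule preimage)
  note xy = x0(1) x1(1) y0(1) y1(1) and fxy = x0(2) x1(2) y0(2) y1(2)
  have "f (x0 \<otimes> x1) = f (y0 \<otimes> y1)" using e xy by (simp add: f_mult fxy)
  then have "qcong M N (x0 \<otimes> x1) (y0 \<otimes> y1)" using f_eq xy by simp
  then consider "x0 \<otimes> x1 = y0 \<otimes> y1" | "x0 \<otimes> x1 \<in> N" "y0 \<otimes> y1 \<in> N"
    using qcong_iff xy by auto
  then show "refines S s0 s1 t0 t1"
  proof cases
    case 1
    then obtain c00 c01 c10 c11 where c: "c00 \<in> carrier M" "c01 \<in> carrier M"
      "c10 \<in> carrier M" "c11 \<in> carrier M"
      "x0 = c00 \<otimes> c01" "x1 = c10 \<otimes> c11" "y0 = c00 \<otimes> c10" "y1 = c01 \<otimes> c11"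
      using refinesD[OF assms xy] unfolding refines_def by blast
    then show ?thesis
      by (intro refinesI[of "f c00" _ "f c01" "f c10" "f c11"]) (simp_all add: fxy[symmetric] f_mult f_closed)
  next
    case 2
    then have "x0 \<in> N" "x1 \<in> N" "y0 \<in> N" "y1 \<in> N" using xy mult_N by auto
    then have "s0 = \<one>\<^bsub>S\<^esub>" "s1 = \<one>\<^bsub>S\<^esub>" "t0 = \<one>\<^bsub>S\<^esub>" "t1 = \<one>\<^bsub>S\<^esub>"
      using xy f_one_iff by (simp_all flip: fxy)
    then show ?thesis by (intro refinesI[of "\<one>\<^bsub>S\<^esub>" _ "\<one>\<^bsub>S\<^esub>" "\<one>\<^bsub>S\<^esub>" "\<one>\<^bsub>S\<^esub>"]) simp_all
  qed
qed

text \<open>Conversely, M is primely generated and refinement as soon as N and S are: outside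
N, sums and refinements in S lift uniquely along f.\<close>
lemma primely_generated_from_parts:
  assumes "primely_generated (submon M N)" and "primely_generated S"
  shows "primely_generated M"
  unfolding primely_generated_def
proof
  fix x assume x: "x \<in> carrier M"
  show "\<exists>xs. set xs \<subseteq> primes M \<and> x = lsum M xs"
  proof (cases "x \<in> N")
    case True
    then obtain xs where "set xs \<subseteq> primes (submon M N)" "x = lsum (submon M N) xs"
      using assms(1) unfolding primely_generated_def by auto
    then show ?thesis by (intro exI[of _ xs]) (auto simp: primes_submon)
  next
    case False
    have "f x \<in> carrier S" using x by (rule f_closed)
    then obtain ss where ss: "set ss \<subseteq> primes S" "f x = lsum S ss"
      using assms(2) unfolding primely_generated_def by blast
    define xs where "xs = map (inv_into (primes M - N) f) ss"
    have ss_image: "set ss \<subseteq> f ` (primes M - N)" using ss(1) primes_quotient by simp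
    then have "inv_into (primes M - N) f s \<in> primes M - N" if "s \<in> set ss" for s
      using inv_into_into subsetD that by metis
    then have xs_primes: "set xs \<subseteq> primes M - N" unfolding xs_def by auto
    then have "set xs \<subseteq> primes M" by blast
    then have xs_carrier: "set xs \<subseteq> carrier M" using primes_subset_carrier by (rule order_trans)
    have "map f xs = ss"
      unfolding xs_def map_map using ss_image by (intro map_idI) (auto simp: f_inv_into_f)
    then have "f (lsum M xs) = f x" using ss(2) f_lsum[OF xs_carrier] by simp
    then have "x = lsum M xs"
      using f_inj[OF x lsum_closed[OF comm_monoid_axioms xs_carrier] False] by simp
    then show ?thesis using xs_primes by blast
  qed
qed

lemma refinement_from_parts:
  assumes "refinement_monoid (submon M N)" and "refinement_monoid S"
  shows "refinement_monoid M"
proof (rule refinement_absorbing[OF assms(1)])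
  fix a0 a1 b0 b1 assume ab: "a0 \<in> carrier M - N" "a1 \<in> carrier M - N"
    "b0 \<in> carrier M - N" "b1 \<in> carrier M - N" and e: "a0 \<otimes> a1 = b0 \<otimes> b1"
  have "refines S (f a0) (f a1) (f b0) (f b1)"
    using ab e f_closed f_mult by (intro refinesD[OF assms(2)]) (auto simp flip: f_mult)
  then obtain c00 c01 c10 c11 where c: "c00 \<in> carrier S" "c01 \<in> carrier S"
    "c10 \<in> carrier S" "c11 \<in> carrier S"
    "f a0 = c00 \<otimes>\<^bsub>S\<^esub> c01" "f a1 = c10 \<otimes>\<^bsub>S\<^esub> c11"
    "f b0 = c00 \<otimes>\<^bsub>S\<^esub> c10" "f b1 = c01 \<otimes>\<^bsub>S\<^esub> c11"
    unfolding refines_def by blast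
  obtain d00 where d00: "d00 \<in> carrier M" "f d00 = c00" using c(1) by (rule preimage)
  obtain d01 where d01: "d01 \<in> carrier M" "f d01 = c01" using c(2) by (rule preimage)
  obtain d10 where d10: "d10 \<in> carrier M" "f d10 = c10" using c(3) by (rule preimage)
  obtain d11 where d11: "d11 \<in> carrier M" "f d11 = c11" using c(4) by (rule preimage)
  note d = d00(1) d01(1) d10(1) d11(1) and fd = d00(2) d01(2) d10(2) d11(2)
  have lift: "u = v \<otimes> w"
    if "u \<in> carrier M - N" "v \<in> carrier M" "w \<in> carrier M" "f u = f v \<otimes>\<^bsub>S\<^esub> f w" for u v w
    using that f_inj[of u "v \<otimes> w"] f_mult by simp
  have "a0 = d00 \<otimes> d01" using lift[of a0 d00 d01] ab d c(5) fd by simp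
  moreover have "a1 = d10 \<otimes> d11" using lift[of a1 d10 d11] ab d c(6) fd by simp
  moreover have "b0 = d00 \<otimes> d10" using lift[of b0 d00 d10] ab d c(7) fd by simp
  moreover have "b1 = d01 \<otimes> d11" using lift[of b1 d01 d11] ab d c(8) fd by simp
  ultimately show "refines M a0 a1 b0 b1" using d by (intro refinesI)
qed

end


section \<open>The pullback of two quotient maps\<close>

lemma pullback_carrier:
  "z \<in> carrier (pullback M1 M2 f1 f2) \<longleftrightarrow>
     fst z \<in> carrier M1 \<and> snd z \<in> carrier M2 \<and> f1 (fst z) = f2 (snd z)"
  by (cases z) (simp add: pullback_def)

lemma pullback_mult:
  "z \<otimes>\<^bsub>pullback M1 M2 f1 f2\<^esub> w = (fst z \<otimes>\<^bsub>M1\<^esub> fst w, snd z \<otimes>\<^bsub>M2\<^esub> snd w)"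
  by (simp add: pullback_def mult_DirProd')

lemma pullback_one: "\<one>\<^bsub>pullback M1 M2 f1 f2\<^esub> = (\<one>\<^bsub>M1\<^esub>, \<one>\<^bsub>M2\<^esub>)"
  by (simp add: pullback_def)

lemma lhd_pullback: "lhd (pullback M1 M2 f1 f2) (x, y) (u, v) \<longleftrightarrow> lhd M1 x u \<and> lhd M2 y v"
  by (simp add: lhd_def pullback_mult)

locale quotient_pullback = q1: quotient_map M1 N1 S f1 + q2: quotient_map M2 N2 S f2
  for M1 :: "'a monoid" and N1 and M2 :: "'b monoid" and N2 and S :: "'s monoid" and f1 f2
begin

abbreviation P where "P \<equiv> pullback M1 M2 f1 f2"

lemma N_carrier_P:
  assumes "z \<in> N1 \<times> N2" shows "z \<in> carrier P"
proof -
  have "fst z \<in> N1" "snd z \<in> N2" using assms by auto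
  then have "f1 (fst z) = \<one>\<^bsub>S\<^esub>" "f2 (snd z) = \<one>\<^bsub>S\<^esub>"
    using q1.f_one_iff q2.f_one_iff q1.N_carrier q2.N_carrier by auto
  then show ?thesis using \<open>fst z \<in> N1\<close> \<open>snd z \<in> N2\<close> q1.N_carrier q2.N_carrier
    by (simp add: pullback_carrier)
qed

text \<open>An element of P lies in N1 \<times> N2 as soon as one of its coordinates lies in
the corresponding ideal, since both coordinates have the same image in S.\<close>
lemma in_N_iff:
  assumes "z \<in> carrier P"
  shows "z \<in> N1 \<times> N2 \<longleftrightarrow> fst z \<in> N1" and "z \<in> N1 \<times> N2 \<longleftrightarrow> snd z \<in> N2"
  using assms q1.f_one_iff[of "fst z"] q2.f_one_iff[of "snd z"]
  by (auto simp: pullback_carrier mem_Times_iff)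

lemma comm_monoid_P: "comm_monoid P"
proof (rule comm_monoidI)
  fix x y z assume "x \<in> carrier P" "y \<in> carrier P" "z \<in> carrier P"
  then show "x \<otimes>\<^bsub>P\<^esub> y \<otimes>\<^bsub>P\<^esub> z = x \<otimes>\<^bsub>P\<^esub> (y \<otimes>\<^bsub>P\<^esub> z)"
    by (simp add: pullback_carrier pullback_mult q1.m_assoc q2.m_assoc)
next
  fix x y assume "x \<in> carrier P" "y \<in> carrier P"
  then show "x \<otimes>\<^bsub>P\<^esub> y \<in> carrier P" and "x \<otimes>\<^bsub>P\<^esub> y = y \<otimes>\<^bsub>P\<^esub> x"
    by (simp_all add: pullback_carrier pullback_mult q1.f_mult q2.f_mult q1.m_comm q2.m_comm)
qed (auto simp: pullback_carrier pullback_mult pullback_one q1.f_one q2.f_one)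

lemma absorbing_P: "absorbing P (N1 \<times> N2)"
proof -
  interpret P: comm_monoid P by (fact comm_monoid_P)
  have "order_ideal P (N1 \<times> N2)"
    unfolding order_ideal_def
  proof (intro conjI ballI)
    fix x y assume xy: "x \<in> carrier P" "y \<in> carrier P"
    then have "x \<otimes>\<^bsub>P\<^esub> y \<in> N1 \<times> N2 \<longleftrightarrow> fst x \<otimes>\<^bsub>M1\<^esub> fst y \<in> N1"
      using in_N_iff(1)[OF P.m_closed[OF xy]] by (simp add: pullback_mult)
    then show "x \<otimes>\<^bsub>P\<^esub> y \<in> N1 \<times> N2 \<longleftrightarrow> x \<in> N1 \<times> N2 \<and> y \<in> N1 \<times> N2"
      using xy q1.mult_N in_N_iff(1) by (simp add: pullback_carrier)
  qed (use N_carrier_P q1.one_N q2.one_N in auto)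
  moreover have "x \<otimes>\<^bsub>P\<^esub> n = x" if "x \<in> carrier P" "x \<notin> N1 \<times> N2" "n \<in> N1 \<times> N2" for x n
    using that in_N_iff[OF that(1)] q1.absorb q2.absorb
    by (auto simp: pullback_carrier pullback_mult prod_eq_iff)
  ultimately show ?thesis by unfold_locales
qed

lemma submon_P: "submon P (N1 \<times> N2) = submon M1 N1 \<times>\<times> submon M2 N2"
  by (simp add: submon_def pullback_def DirProd_def)

lemma quotient_map_P: "quotient_map P (N1 \<times> N2) S (\<lambda>z. f1 (fst z))"
proof -
  interpret P: absorbing P "N1 \<times> N2" by (fact absorbing_P)
  have "(\<lambda>z. f1 (fst z)) \<in> hom P S"
    by (rule homI) (auto simp: pullback_carrier pullback_mult q1.f_closed q2.f_closed q1.f_mult)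
  moreover have "(\<lambda>z. f1 (fst z)) ` carrier P = carrier S"
  proof
    show "carrier S \<subseteq> (\<lambda>z. f1 (fst z)) ` carrier P"
    proof
      fix s assume s: "s \<in> carrier S"
      obtain x where "x \<in> carrier M1" "f1 x = s" using s by (rule q1.preimage)
      moreover obtain y where "y \<in> carrier M2" "f2 y = s" using s by (rule q2.preimage)
      ultimately show "s \<in> (\<lambda>z. f1 (fst z)) ` carrier P"
        by (intro image_eqI[of _ _ "(x, y)"]) (auto simp: pullback_carrier)
    qed
  qed (auto simp: pullback_carrier q1.f_closed q2.f_closed)
  moreover have "f1 (fst x) = f1 (fst y) \<longleftrightarrow> qcong P (N1 \<times> N2) x y"
    if xy: "x \<in> carrier P" "y \<in> carrier P" for x y
  proof -
    have c: "fst x \<in> carrier M1" "fst y \<in> carrier M1" "snd x \<in> carrier M2" "snd y \<in> carrier M2"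
      "f1 (fst x) = f2 (snd x)" "f1 (fst y) = f2 (snd y)" using xy by (auto simp: pullback_carrier)
    have "f1 (fst x) = f1 (fst y) \<longleftrightarrow> (fst x \<in> N1 \<and> fst y \<in> N1) \<or> fst x = fst y"
      using q1.f_eq q1.qcong_iff c(1,2) by simp
    also have "\<dots> \<longleftrightarrow> (x \<in> N1 \<times> N2 \<and> y \<in> N1 \<times> N2) \<or> x = y"
      using in_N_iff[OF xy(1)] in_N_iff[OF xy(2)] q2.f_inj c by (auto simp: prod_eq_iff)
    also have "\<dots> \<longleftrightarrow> qcong P (N1 \<times> N2) x y" using P.qcong_iff xy by simp
    finally show ?thesis .
  qed
  ultimately show ?thesis
    using absorbing_P q1.S by (simp add: quotient_map_def quotient_map_axioms_def)
qed

end

sublocale quotient_pullback \<subseteq> P: quotient_map "pullback M1 M2 f1 f2" "N1 \<times> N2" S "\<lambda>z. f1 (fst z)"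
  by (rule quotient_map_P)

context quotient_pullback
begin

text \<open>P is primitive: on N1 \<times> N2 it is the product of the primitive monoids N1 and N2,
and outside it is controlled by the primitive quotient S.\<close>
lemma primitive_P:
  assumes "primitive M1" and "primitive M2"
  shows "primitive P"
proof -
  have N: "primitive (submon P (N1 \<times> N2))"
    unfolding submon_P using assms by (intro primitive_DirProd q1.primitive_submon q2.primitive_submon)
  have "antisymmetric_monoid P"
    using primitive_DirProd[OF assms] unfolding pullback_def primitive_def
    by (intro antisymmetric_carrier_update) auto
  moreover have "primely_generated P"
    using N assms by (intro P.primely_generated_from_parts q1.primely_generated_quotient)
      (auto simp: primitive_def)
  moreover have "refinement_monoid P"
    using N assms by (intro P.refinement_from_parts q1.refinement_quotient)
      (auto simp: primitive_def)
  ultimately show ?thesis using comm_monoid_P by (simp add: primitive_def)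
qed

lemma primes_P_in_N:
  assumes "antisymmetric_monoid M1" and "antisymmetric_monoid M2"
  shows "primes P \<inter> (N1 \<times> N2) =
    (\<lambda>a. (a, \<one>\<^bsub>M2\<^esub>)) ` primes (submon M1 N1) \<union> (\<lambda>b. (\<one>\<^bsub>M1\<^esub>, b)) ` primes (submon M2 N2)"
proof -
  have "primes (submon M1 N1 \<times>\<times> submon M2 N2) =
    (\<lambda>a. (a, \<one>\<^bsub>M2\<^esub>)) ` primes (submon M1 N1) \<union> (\<lambda>b. (\<one>\<^bsub>M1\<^esub>, b)) ` primes (submon M2 N2)"
    using primes_DirProd[OF q1.comm_monoid_submon q1.antisymmetric_submon[OF assms(1)]
        q2.comm_monoid_submon q2.antisymmetric_submon[OF assms(2)]] by simp
  then show ?thesis using P.primes_submon submon_P by simp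
qed

definition prime_label :: "'a \<times> 'b \<Rightarrow> 's + ('a + 'b)" where
  "prime_label z = (if z \<in> N1 \<times> N2
     then Inr (if snd z = \<one>\<^bsub>M2\<^esub> then Inl (fst z) else Inr (snd z))
     else Inl (f1 (fst z)))"

text \<open>It is a bijection: outside N1 \<times> N2 the quotient map of P is a bijection onto the
primes of S, and inside the labelling of the product N1 \<times> N2 applies.\<close>
lemma bij_betw_prime_label:
  assumes "antisymmetric_monoid M1" and "antisymmetric_monoid M2"
  shows "bij_betw prime_label (primes P)
    (Inl ` primes S \<union> Inr ` (Inl ` primes (submon M1 N1) \<union> Inr ` primes (submon M2 N2)))"
proof -
  have "bij_betw (\<lambda>z. if snd z = \<one>\<^bsub>M2\<^esub> then Inl (fst z) else Inr (snd z))
      (primes P \<inter> (N1 \<times> N2)) (Inl ` primes (submon M1 N1) \<union> Inr ` primes (submon M2 N2))"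
    unfolding primes_P_in_N[OF assms] using q2.one_notin_primes_submon by (rule bij_betw_DirProd_label)
  moreover have "bij_betw (\<lambda>z. f1 (fst z)) (primes P - primes P \<inter> (N1 \<times> N2)) (primes S)"
    using P.bij_betw_primes by (simp add: Diff_Int_distrib2 Diff_Int)
  ultimately have "bij_betw (\<lambda>z. if z \<in> primes P \<inter> (N1 \<times> N2)
      then Inr (if snd z = \<one>\<^bsub>M2\<^esub> then Inl (fst z) else Inr (snd z)) else Inl (f1 (fst z)))
    (primes P) (Inl ` primes S \<union> Inr ` (Inl ` primes (submon M1 N1) \<union> Inr ` primes (submon M2 N2)))"
    using bij_betw_sum_if[of "\<lambda>z. f1 (fst z)" "primes P" "primes P \<inter> (N1 \<times> N2)"] by blast
  then show ?thesis by (rule bij_betw_cong[THEN iffD1, rotated]) (simp add: prime_label_def)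
qed

text \<open>Inside N1 \<times> N2, the primes are (a, 0) and (0, b), and \<lhd> is computed in
each coordinate: primes of different factors are never related.\<close>
lemma lhd_primes_in_N:
  assumes "antisymmetric_monoid M1" and "antisymmetric_monoid M2"
    and "p \<in> primes P \<inter> (N1 \<times> N2)" and "q \<in> primes P \<inter> (N1 \<times> N2)"
  shows "lhd P p q \<longleftrightarrow> lhd_sum S (submon M1 N1) (submon M2 N2) (prime_label p) (prime_label q)"
proof -
  have in_N1: "a \<in> N1" "a \<in> carrier M1" "a \<noteq> \<one>\<^bsub>M1\<^esub>" if "a \<in> primes (submon M1 N1)" for a
    using that primes_carrier[of a "submon M1 N1"] q1.N_carrier q1.one_notin_primes_submon by auto
  have in_N2: "b \<in> N2" "b \<in> carrier M2" "b \<noteq> \<one>\<^bsub>M2\<^esub>" if "b \<in> primes (submon M2 N2)" for b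
    using that primes_carrier[of b "submon M2 N2"] q2.N_carrier q2.one_notin_primes_submon by auto
  have label1: "prime_label (a, \<one>\<^bsub>M2\<^esub>) = Inr (Inl a)" if "a \<in> primes (submon M1 N1)" for a
    using in_N1[OF that] q2.one_N by (simp add: prime_label_def)
  have label2: "prime_label (\<one>\<^bsub>M1\<^esub>, b) = Inr (Inr b)" if "b \<in> primes (submon M2 N2)" for b
    using in_N2[OF that] q1.one_N by (simp add: prime_label_def)
  have "(\<exists>a\<in>primes (submon M1 N1). p = (a, \<one>\<^bsub>M2\<^esub>)) \<or> (\<exists>b\<in>primes (submon M2 N2). p = (\<one>\<^bsub>M1\<^esub>, b))"
    and "(\<exists>a\<in>primes (submon M1 N1). q = (a, \<one>\<^bsub>M2\<^esub>)) \<or> (\<exists>b\<in>primes (submon M2 N2). q = (\<one>\<^bsub>M1\<^esub>, b))"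
    using assms(3,4) unfolding primes_P_in_N[OF assms(1,2)] by blast+
  then show ?thesis
    by (elim disjE bexE)
      (simp_all add: label1 label2 lhd_pullback, simp_all add: lhd_def in_N1 in_N2)
qed

lemma lhd_prime_label:
  assumes "antisymmetric_monoid M1" and "antisymmetric_monoid M2"
    and p: "p \<in> primes P" and q: "q \<in> primes P"
  shows "lhd P p q \<longleftrightarrow> lhd_sum S (submon M1 N1) (submon M2 N2) (prime_label p) (prime_label q)"
proof -
  have pc: "p \<in> carrier P" using p by (rule primes_carrier)
  have qc: "q \<in> carrier P" using q by (rule primes_carrier)
  consider "p \<notin> N1 \<times> N2" "q \<notin> N1 \<times> N2" | "p \<in> N1 \<times> N2" "q \<notin> N1 \<times> N2"
    | "p \<notin> N1 \<times> N2" "q \<in> N1 \<times> N2" | "p \<in> N1 \<times> N2" "q \<in> N1 \<times> N2" by blast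
  then show ?thesis
  proof cases
    case 1
    then show ?thesis using P.lhd_quotient[OF pc qc] by (simp add: prime_label_def)
  next
    case 2
    then show ?thesis using P.absorb[OF qc] by (simp add: prime_label_def lhd_def)
  next
    case 3
    then have "\<not> lhd P p q" using P.mult_N[OF qc pc] unfolding lhd_def by auto
    then show ?thesis using 3 by (simp add: prime_label_def)
  next
    case 4
    then show ?thesis using lhd_primes_in_N[OF assms(1,2)] p q by blast
  qed
qed

text \<open>The theorem for a pullback of quotient maps: the ideal is N1 \<times> N2, the isomorphism
with N1 \<times> N2 is the identity, the isomorphism P/N \<cong> S is induced by the quotient map of P,
and the primes are labelled by prime_label.\<close>
lemma pullback_structure:
  assumes "primitive M1" and "primitive M2"
  shows "primitive P \<and>
    (\<exists>N \<psi> \<chi> g.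
       order_ideal P N \<and>
       \<psi> \<in> iso (submon P N) (submon M1 N1 \<times>\<times> submon M2 N2) \<and>
       \<chi> \<in> iso (quot P N) S \<and>
       bij_betw g (primes P)
         (Inl ` primes S \<union> Inr ` (Inl ` primes (submon M1 N1) \<union> Inr ` primes (submon M2 N2))) \<and>
       (\<forall>p\<in>primes P - N. g p = Inl (\<chi> (qclass P N p))) \<and>
       (\<forall>p\<in>primes P \<inter> N. \<forall>a. g p = Inr (Inl a) \<longrightarrow> \<psi> p = (a, \<one>\<^bsub>M2\<^esub>)) \<and>
       (\<forall>p\<in>primes P \<inter> N. \<forall>b. g p = Inr (Inr b) \<longrightarrow> \<psi> p = (\<one>\<^bsub>M1\<^esub>, b)) \<and>
       (\<forall>p\<in>primes P. \<forall>q\<in>primes P. lhd P p q \<longleftrightarrow> lhd_sum S (submon M1 N1) (submon M2 N2) (g p) (g q)))"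
proof -
  have antisym: "antisymmetric_monoid M1" "antisymmetric_monoid M2"
    using assms by (simp_all add: primitive_def)
  define \<chi> :: "('a \<times> 'b) set \<Rightarrow> 's" where "\<chi> = (\<lambda>A. f1 (fst (SOME a. a \<in> A)))"
  have \<chi>: "\<chi> \<in> iso (quot P (N1 \<times> N2)) S" "\<And>x. x \<in> carrier P \<Longrightarrow> \<chi> (qclass P (N1 \<times> N2) x) = f1 (fst x)"
    using P.quot_iso_of_quotient_map[OF P.f_hom P.f_onto P.f_eq] unfolding \<chi>_def by blast+
  have "prime_label p = Inl (\<chi> (qclass P (N1 \<times> N2) p))" if "p \<in> primes P - N1 \<times> N2" for p
    using that primes_carrier[of p P] \<chi>(2)[of p] by (simp add: prime_label_def)
  moreover have "\<forall>p\<in>primes P \<inter> (N1 \<times> N2). \<forall>a. prime_label p = Inr (Inl a) \<longrightarrow> id p = (a, \<one>\<^bsub>M2\<^esub>)"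
    by (auto simp: prime_label_def prod_eq_iff split: if_splits)
  moreover have "\<forall>p\<in>primes P \<inter> (N1 \<times> N2). \<forall>b. prime_label p = Inr (Inr b) \<longrightarrow> id p = (\<one>\<^bsub>M1\<^esub>, b)"
    unfolding primes_P_in_N[OF antisym] by (auto simp: prime_label_def)
  moreover have "id \<in> iso (submon P (N1 \<times> N2)) (submon M1 N1 \<times>\<times> submon M2 N2)"
    unfolding submon_P by (rule id_iso)
  ultimately show ?thesis
    using primitive_P[OF assms] P.order_ideal \<chi>(1) bij_betw_prime_label[OF antisym]
      lhd_prime_label[OF antisym] by blast
qed

end

lemma quotient_map_of_primitive:
  assumes "primitive M" and "order_ideal M N" and "comm_monoid S" and "\<phi> \<in> iso (quot M N) S"
    and "\<forall>p\<in>primes (submon M N). \<forall>q\<in>primes M - primes (submon M N). lhd M p q"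
  shows "quotient_map M N S (\<lambda>x. \<phi> (qclass M N x))"
proof -
  interpret ord_ideal M N
    using assms(1,2) by (simp add: ord_ideal_def ord_ideal_axioms_def primitive_def)
  have "absorbing M N"
    using absorbed_if_primes_absorbed assms(1,5)
    by unfold_locales (auto simp: primitive_def)
  then show ?thesis
    using assms(3) quotient_map_of_quot_iso[OF assms(4)]
    by (simp add: quotient_map_def quotient_map_axioms_def)
qed

theorem mainTheorem12:
  fixes M1 :: "'a monoid" and M2 :: "'b monoid" and S :: "'s monoid"
    and N1 :: "'a set" and N2 :: "'b set"
    and \<phi>1 :: "'a set \<Rightarrow> 's" and \<phi>2 :: "'b set \<Rightarrow> 's"
  assumes "primitive M1" and "primitive M2"
    and "order_ideal M1 N1" and "order_ideal M2 N2"
    and "comm_monoid S"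
    and "\<phi>1 \<in> iso (quot M1 N1) S" and "\<phi>2 \<in> iso (quot M2 N2) S"
    and "\<forall>p\<in>primes (submon M1 N1). \<forall>q\<in>primes M1 - primes (submon M1 N1). lhd M1 p q"
    and "\<forall>p\<in>primes (submon M2 N2). \<forall>q\<in>primes M2 - primes (submon M2 N2). lhd M2 p q"
  defines "P \<equiv> pullback M1 M2 (\<lambda>x. \<phi>1 (qclass M1 N1 x)) (\<lambda>y. \<phi>2 (qclass M2 N2 y))"
  shows "primitive P \<and>
    (\<exists>N \<psi> \<chi> g.
       order_ideal P N \<and>
       \<psi> \<in> iso (submon P N) (submon M1 N1 \<times>\<times> submon M2 N2) \<and>
       \<chi> \<in> iso (quot P N) S \<and>
       bij_betw g (primes P)
         (Inl ` primes S \<union> Inr ` (Inl ` primes (submon M1 N1) \<union> Inr ` primes (submon M2 N2))) \<and>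
       (\<forall>p\<in>primes P - N. g p = Inl (\<chi> (qclass P N p))) \<and>
       (\<forall>p\<in>primes P \<inter> N. \<forall>a. g p = Inr (Inl a) \<longrightarrow> \<psi> p = (a, \<one>\<^bsub>M2\<^esub>)) \<and>
       (\<forall>p\<in>primes P \<inter> N. \<forall>b. g p = Inr (Inr b) \<longrightarrow> \<psi> p = (\<one>\<^bsub>M1\<^esub>, b)) \<and>
       (\<forall>p\<in>primes P. \<forall>q\<in>primes P. lhd P p q \<longleftrightarrow> lhd_sum S (submon M1 N1) (submon M2 N2) (g p) (g q)))"
proof -
  have "quotient_map M1 N1 S (\<lambda>x. \<phi>1 (qclass M1 N1 x))"
    using assms(1,3,5,6,8) by (rule quotient_map_of_primitive)
  moreover have "quotient_map M2 N2 S (\<lambda>y. \<phi>2 (qclass M2 N2 y))"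
    using assms(2,4,5,7,9) by (rule quotient_map_of_primitive)
  ultimately interpret quotient_pullback M1 N1 M2 N2 S
      "\<lambda>x. \<phi>1 (qclass M1 N1 x)" "\<lambda>y. \<phi>2 (qclass M2 N2 y)"
    by (simp add: quotient_pullback_def)
  show ?thesis
    unfolding P_def using assms(1,2) by (rule pullback_structure)
qed

end
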